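(* There exist positive constants $C_1, C_2$ that do not depend on $\beta$ such that, for every $\beta>0$, \[ \mathbb{P}_{(0, y +\beta)}\left(\tau_1\left(-\frac{\beta}{2}\right) \le \tau_2\left(\frac{y}{2} + \beta\right)\right) \le C_1 \mathrm{e}^{-C_2\beta y} \] for all $y \ge \frac{1}{4\beta}$ if $\beta \ge 1$, and for all $y \ge \frac{64}{\beta}\log \frac{1}{\beta}$ if $\beta <1$.
   Context: For $\beta>0$ and an initial state $(x,y)$ with $x\le 0$, $y\ge 0$, let $(Q_1,Q_2)$ be the continuous process on $[0,\infty)$ solving \[ Q_1(t) = x + \sqrt{2}W(t) - \beta t + \int_0^t(-Q_1(s)+Q_2(s))\,ds - L(t),\qquad Q_2(t) = y + L(t) - \int_0^t Q_2(s)\,ds, \] where $W$ is a standard Brownian motion and $L$ is the unique nondecreasing nonnegative càdlàg process with $L(0)=0$ such that $Q_1(t)\le 0$ for all $t$ and $\int_0^\infty \mathbf{1}_{[Q_1(t)<0]}\,dL(t)=0$. $\mathbb{P}_{(x,y)}$ denotes probability when $(Q_1(0),Q_2(0))=(x,y)$; $\tau_i(z)=\inf\{t\ge0: Q_i(t)=z\}$ for $i=1,2$. *)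

theory Defs
  imports "HOL-Probability.Probability"
begin

definition standard_BM :: "'a measure \<Rightarrow> (real \<Rightarrow> 'a \<Rightarrow> real) \<Rightarrow> bool" where
  "standard_BM M W \<longleftrightarrow>
     prob_space M \<and>
     (\<forall>t\<ge>0. W t \<in> borel_measurable M) \<and>
     (AE \<omega> in M. W 0 \<omega> = 0 \<and> continuous_on {0..} (\<lambda>t. W t \<omega>)) \<and>
     (\<forall>s t. 0 \<le> s \<and> s < t \<longrightarrow>
        distributed M lborel (\<lambda>\<omega>. W t \<omega> - W s \<omega>) (\<lambda>x. ennreal (normal_density 0 (sqrt (t - s)) x))) \<and>
     (\<forall>(n::nat) (ts::nat \<Rightarrow> real). 0 \<le> ts 0 \<and> (\<forall>i<n. ts i < ts (Suc i)) \<longrightarrow>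
        prob_space.indep_vars M (\<lambda>_. borel) (\<lambda>i \<omega>. W (ts (Suc i)) \<omega> - W (ts i) \<omega>) {..<n})"

definition cadlag_on_nonneg :: "(real \<Rightarrow> real) \<Rightarrow> bool" where
  "cadlag_on_nonneg f \<longleftrightarrow>
     (\<forall>t\<ge>0. continuous (at_right t) f) \<and>
     (\<forall>t>0. \<exists>l. (f \<longlongrightarrow> l) (at_left t))"

text \<open>The condition
  \<open>\<integral> 1[Q1(t)<0] dL(t) = 0\<close> is the Lebesgue--Stieltjes integral w.r.t. the path of L
  (extended by 0 to negative times).\<close>
definition reflected_solution ::
  "'a measure \<Rightarrow> real \<Rightarrow> real \<Rightarrow> real \<Rightarrow> (real \<Rightarrow> 'a \<Rightarrow> real) \<Rightarrow>
   (real \<Rightarrow> 'a \<Rightarrow> real) \<Rightarrow> (real \<Rightarrow> 'a \<Rightarrow> real) \<Rightarrow> (real \<Rightarrow> 'a \<Rightarrow> real) \<Rightarrow> bool" where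
  "reflected_solution M \<beta> x y W Q1 Q2 L \<longleftrightarrow>
     (AE \<omega> in M.
        continuous_on {0..} (\<lambda>t. Q1 t \<omega>) \<and>
        continuous_on {0..} (\<lambda>t. Q2 t \<omega>) \<and>
        (\<forall>t\<ge>0. Q1 t \<omega> = x + sqrt 2 * W t \<omega> - \<beta> * t
                   + integral {0..t} (\<lambda>s. - Q1 s \<omega> + Q2 s \<omega>) - L t \<omega>) \<and>
        (\<forall>t\<ge>0. Q2 t \<omega> = y + L t \<omega> - integral {0..t} (\<lambda>s. Q2 s \<omega>)) \<and>
        L 0 \<omega> = 0 \<and>
        mono_on {0..} (\<lambda>t. L t \<omega>) \<and>
        (\<forall>t\<ge>0. 0 \<le> L t \<omega>) \<and>
        cadlag_on_nonneg (\<lambda>t. L t \<omega>) \<and>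
        (\<forall>t\<ge>0. Q1 t \<omega> \<le> 0) \<and>
        (\<integral>\<^sup>+ t. indicator {t. 0 \<le> t \<and> Q1 t \<omega> < 0} t
            \<partial>interval_measure (\<lambda>t. L (max 0 t) \<omega>)) = 0)"

text \<open>Hitting time inf{t >= 0. Q(t) = z}, with inf of the empty set = infinity.\<close>
definition hit_time :: "(real \<Rightarrow> 'a \<Rightarrow> real) \<Rightarrow> real \<Rightarrow> 'a \<Rightarrow> ereal" where
  "hit_time Q z \<omega> = Inf (ereal ` {t. 0 \<le> t \<and> Q t \<omega> = z})"

end

theory Submission
  imports Defs
begin

text \<open>Suppose \<open>Q1\<close> reaches \<open>-\<beta>/2\<close> no later than \<open>Q2\<close> reaches \<open>y/2 + \<beta>\<close>. If this happens at a time
  \<open>t1 \<le> T = 2 (y + \<beta>) / \<beta>\<close>, let \<open>\<sigma>\<close> be the last zero of \<open>Q1\<close> before \<open>t1\<close>: on \<open>[\<sigma>, t1]\<close> the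
  regulator \<open>L\<close> is flat and the drift \<open>-Q1 + Q2\<close> is at least \<open>y/2 + \<beta>\<close>, so \<open>W\<close> must drop by
  about \<open>\<beta> + y (t1 - \<sigma>)\<close> between \<open>\<sigma>\<close> and \<open>t1\<close>. Otherwise \<open>Q1 \<ge> -\<beta>/2\<close> and \<open>Q2 \<ge> y/2 + \<beta>\<close> on
  \<open>[0, T]\<close>, which forces \<open>W T\<close> to be of order \<open>y + \<beta>\<close>. Both are Gaussian tail events. The
  second is estimated directly; for the first, time is discretized with mesh \<open>h \<sim> \<beta> / y\<close>,
  the oscillation of \<open>W\<close> inside a grid cell is controlled by a dyadic chaining argument, and a
  union bound over pairs of grid points gives a geometric series. The result is a bound
  \<open>C exp (-\<beta> y / 96)\<close> once \<open>\<beta> y\<close> is large, the lower bound on \<open>y\<close> making the polynomial number of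
  grid cells harmless; for bounded \<open>\<beta> y\<close> the estimate is trivial.\<close>

section \<open>Gaussian tails of Brownian increments\<close>

lemma normal_density_le_shifted:
  fixes \<sigma> c x :: real
  assumes "\<sigma> > 0" "0 \<le> c * (x - c)"
  shows "normal_density 0 \<sigma> x \<le> exp (- c\<^sup>2 / (2 * \<sigma>\<^sup>2)) * normal_density c \<sigma> x"
proof -
  have "- x\<^sup>2 \<le> - c\<^sup>2 - (x - c)\<^sup>2"
    using assms(2) by (simp add: power2_eq_square algebra_simps)
  then have "(- x\<^sup>2) / (2 * \<sigma>\<^sup>2) \<le> (- c\<^sup>2 - (x - c)\<^sup>2) / (2 * \<sigma>\<^sup>2)"
    by (rule divide_right_mono) simp
  then have "exp (- x\<^sup>2 / (2 * \<sigma>\<^sup>2)) \<le> exp (- c\<^sup>2 / (2 * \<sigma>\<^sup>2)) * exp (- (x - c)\<^sup>2 / (2 * \<sigma>\<^sup>2))"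
    by (simp add: diff_divide_distrib exp_add[symmetric])
  then show ?thesis
    unfolding normal_density_def by (simp add: divide_right_mono)
qed

lemma nn_integral_normal_density_tail:
  fixes \<sigma> c :: real
  assumes \<sigma>: "\<sigma> > 0" and A: "\<And>x. x \<in> A \<Longrightarrow> 0 \<le> c * (x - c)"
  shows "(\<integral>\<^sup>+x. ennreal (normal_density 0 \<sigma> x) * indicator A x \<partial>lborel)
           \<le> ennreal (exp (- c\<^sup>2 / (2 * \<sigma>\<^sup>2)))"
proof -
  have "ennreal (normal_density 0 \<sigma> x) * indicator A x
          \<le> ennreal (exp (- c\<^sup>2 / (2 * \<sigma>\<^sup>2))) * ennreal (normal_density c \<sigma> x)" for x
    using normal_density_le_shifted[OF \<sigma> A[of x]]
    by (cases "x \<in> A") (simp_all add: ennreal_mult[symmetric])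
  then have "(\<integral>\<^sup>+x. ennreal (normal_density 0 \<sigma> x) * indicator A x \<partial>lborel)
      \<le> (\<integral>\<^sup>+x. ennreal (exp (- c\<^sup>2 / (2 * \<sigma>\<^sup>2))) * ennreal (normal_density c \<sigma> x) \<partial>lborel)"
    by (intro nn_integral_mono)
  also have "\<dots> = ennreal (exp (- c\<^sup>2 / (2 * \<sigma>\<^sup>2))) * (\<integral>\<^sup>+x. ennreal (normal_density c \<sigma> x) \<partial>lborel)"
    by (simp add: nn_integral_cmult)
  also have "(\<integral>\<^sup>+x. ennreal (normal_density c \<sigma> x) \<partial>lborel) = 1"
    using \<sigma> by (subst nn_integral_eq_integral) auto
  finally show ?thesis by simp
qed

lemma standard_BM_prob_space: "standard_BM M W \<Longrightarrow> prob_space M"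
  unfolding standard_BM_def by auto

lemma standard_BM_measurable: "standard_BM M W \<Longrightarrow> 0 \<le> t \<Longrightarrow> W t \<in> borel_measurable M"
  unfolding standard_BM_def by auto

lemma standard_BM_increment_tail:
  assumes bm: "standard_BM M W" and st: "0 \<le> s" "s < t"
    and A: "A \<in> sets borel" "\<And>x. x \<in> A \<Longrightarrow> 0 \<le> c * (x - c)"
  shows "measure M {\<omega> \<in> space M. W t \<omega> - W s \<omega> \<in> A} \<le> exp (- c\<^sup>2 / (2 * (t - s)))"
proof -
  have "distributed M lborel (\<lambda>\<omega>. W t \<omega> - W s \<omega>) (\<lambda>x. ennreal (normal_density 0 (sqrt (t - s)) x))"
    using bm st unfolding standard_BM_def by auto
  then have "emeasure M ((\<lambda>\<omega>. W t \<omega> - W s \<omega>) -` A \<inter> space M)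
      = (\<integral>\<^sup>+x. ennreal (normal_density 0 (sqrt (t - s)) x) * indicator A x \<partial>lborel)"
    by (rule distributed_emeasure) (use A in simp)
  also have "\<dots> \<le> ennreal (exp (- c\<^sup>2 / (2 * (sqrt (t - s))\<^sup>2)))"
    by (rule nn_integral_normal_density_tail) (use st A in auto)
  also have "(sqrt (t - s))\<^sup>2 = t - s"
    using st by simp
  finally have "emeasure M {\<omega> \<in> space M. W t \<omega> - W s \<omega> \<in> A} \<le> ennreal (exp (- c\<^sup>2 / (2 * (t - s))))"
    by (simp add: vimage_def Int_def conj_commute)
  then show ?thesis
    unfolding measure_def by (intro enn2real_leI) auto
qed

lemma standard_BM_increment_ge:
  assumes "standard_BM M W" "0 \<le> s" "s < t" "0 \<le> c"
  shows "measure M {\<omega> \<in> space M. c \<le> W t \<omega> - W s \<omega>} \<le> exp (- c\<^sup>2 / (2 * (t - s)))"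
  using standard_BM_increment_tail[OF assms(1-3), of "{c..}" c] assms(4) by simp

lemma standard_BM_increment_le:
  assumes "standard_BM M W" "0 \<le> s" "s < t" "0 \<le> c"
  shows "measure M {\<omega> \<in> space M. W t \<omega> - W s \<omega> \<le> - c} \<le> exp (- c\<^sup>2 / (2 * (t - s)))"
proof -
  have "0 \<le> - c * (x - - c)" if "x \<in> {..-c}" for x
    using assms(4) that by (simp add: mult_nonneg_nonpos)
  then show ?thesis
    using standard_BM_increment_tail[OF assms(1-3), of "{..-c}" "- c"] by simp
qed

lemma standard_BM_increment_abs_ge:
  assumes bm: "standard_BM M W" and st: "0 \<le> s" "s < t" and c: "0 \<le> c"
  shows "measure M {\<omega> \<in> space M. c \<le> \<bar>W t \<omega> - W s \<omega>\<bar>} \<le> 2 * exp (- c\<^sup>2 / (2 * (t - s)))"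
proof -
  have [measurable]: "W t \<in> borel_measurable M" "W s \<in> borel_measurable M"
    using standard_BM_measurable[OF bm] st by auto
  have "{\<omega> \<in> space M. c \<le> \<bar>W t \<omega> - W s \<omega>\<bar>}
      = {\<omega> \<in> space M. c \<le> W t \<omega> - W s \<omega>} \<union> {\<omega> \<in> space M. W t \<omega> - W s \<omega> \<le> - c}"
    by auto
  also have "measure M \<dots> \<le> measure M {\<omega> \<in> space M. c \<le> W t \<omega> - W s \<omega>}
                          + measure M {\<omega> \<in> space M. W t \<omega> - W s \<omega> \<le> - c}"
    by (rule measure_Un_le) measurable
  also have "\<dots> \<le> 2 * exp (- c\<^sup>2 / (2 * (t - s)))"
    using standard_BM_increment_ge[OF assms] standard_BM_increment_le[OF assms] by simp
  finally show ?thesis .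
qed

section \<open>Dyadic chaining\<close>

lemma dyadic_chain_bound:
  fixes f :: "real \<Rightarrow> real" and \<delta> :: "nat \<Rightarrow> real"
  assumes inc: "\<And>n k. k < 2^n \<Longrightarrow> \<bar>f (u + real (k+1) * h / 2^n) - f (u + real k * h / 2^n)\<bar> \<le> \<delta> n"
  shows "m \<le> 2^n \<Longrightarrow> \<bar>f (u + real m * h / 2^n) - f u\<bar> \<le> (\<Sum>j\<le>n. \<delta> j)"
proof (induction n arbitrary: m)
  case 0
  then have "m = 0 \<or> m = 1" by auto
  then show ?case using inc[of 0 0] by auto
next
  case (Suc n)
  have \<delta>: "0 \<le> \<delta> (Suc n)"
    using inc[of 0 "Suc n"] by (meson abs_ge_zero order_trans zero_less_numeral zero_less_power)
  define q where "q = m div 2"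
  have "q \<le> 2^n" using Suc.prems unfolding q_def by auto
  moreover have "real (2 * q) * h / 2 ^ Suc n = real q * h / 2^n" by simp
  ultimately have IH: "\<bar>f (u + real (2 * q) * h / 2 ^ Suc n) - f u\<bar> \<le> (\<Sum>j\<le>n. \<delta> j)"
    using Suc.IH by simp
  have "m = 2 * q \<or> m = 2 * q + 1" unfolding q_def by auto
  then show ?case
  proof
    assume "m = 2 * q"
    then show ?thesis using IH \<delta> by simp
  next
    assume m: "m = 2 * q + 1"
    then have "2 * q < 2 ^ Suc n" using Suc.prems by simp
    from inc[OF this] m
    have "\<bar>f (u + real m * h / 2 ^ Suc n) - f (u + real (2 * q) * h / 2 ^ Suc n)\<bar> \<le> \<delta> (Suc n)"
      by simp
    with IH show ?thesis by simp
  qed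
qed

lemma dyadic_approx_from_below:
  fixes u h v :: real
  assumes h: "h > 0" and v: "v \<in> {u..u+h}"
  obtains m :: "nat \<Rightarrow> nat" where "\<And>n. m n \<le> 2^n" "\<And>n. u + real (m n) * h / 2^n \<in> {u..v}"
    "(\<lambda>n. u + real (m n) * h / 2^n) \<longlonglongrightarrow> v"
proof
  define x where "x = (v - u) / h"
  have x: "0 \<le> x" "x \<le> 1" using v h unfolding x_def by auto
  define m where "m n = nat \<lfloor>x * 2^n\<rfloor>" for n :: nat
  have m: "real (m n) = of_int \<lfloor>x * 2^n\<rfloor>" for n
    unfolding m_def using x by simp
  show "m n \<le> 2^n" for n
  proof -
    have "\<lfloor>x * 2^n\<rfloor> \<le> \<lfloor>(2::real)^n\<rfloor>" using x by (intro floor_mono) simp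
    then show ?thesis unfolding m_def by (simp add: nat_le_iff)
  qed
  have up: "u + real (m n) * h / 2^n \<le> v" for n
  proof -
    have "real (m n) \<le> x * 2^n" unfolding m by simp
    then have "real (m n) * h \<le> x * 2^n * h" using h by (intro mult_right_mono) auto
    then have "real (m n) * h / 2^n \<le> x * h" by (simp add: divide_le_eq mult_ac)
    then show ?thesis using h unfolding x_def by simp
  qed
  show "u + real (m n) * h / 2^n \<in> {u..v}" for n
    using up h by simp
  have lo: "v - h / 2^n \<le> u + real (m n) * h / 2^n" for n
  proof -
    have "x * 2^n - 1 \<le> real (m n)" unfolding m by linarith
    then have "(x * 2^n - 1) * h \<le> real (m n) * h" using h by (intro mult_right_mono) auto
    then have "(x * 2^n - 1) * h / 2^n \<le> real (m n) * h / 2^n" by (intro divide_right_mono) auto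
    moreover have "(x * 2^n - 1) * h / 2^n = v - u - h / 2^n"
      using h unfolding x_def by (simp add: field_simps)
    ultimately show ?thesis by linarith
  qed
  have "(\<lambda>n. h / 2^n :: real) \<longlonglongrightarrow> 0"
    by (intro tendsto_divide_0[OF tendsto_const]) (simp add: filterlim_realpow_sequentially_gt1)
  then have lim_lo: "(\<lambda>n. v - h / 2^n) \<longlonglongrightarrow> v"
    using tendsto_diff[OF tendsto_const[of v]] by force
  show "(\<lambda>n. u + real (m n) * h / 2^n) \<longlonglongrightarrow> v"
    using lo up by (intro tendsto_sandwich[OF _ _ lim_lo tendsto_const]) simp_all
qed

lemma continuous_dyadic_increments_bound:
  fixes f :: "real \<Rightarrow> real" and \<delta> :: "nat \<Rightarrow> real"
  assumes h: "h > 0" and cont: "continuous_on {u..u+h} f"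
    and inc: "\<And>n k. k < 2^n \<Longrightarrow> \<bar>f (u + real (k+1) * h / 2^n) - f (u + real k * h / 2^n)\<bar> \<le> \<delta> n"
    and sm: "summable \<delta>" and v: "v \<in> {u..u+h}"
  shows "\<bar>f v - f u\<bar> \<le> suminf \<delta>"
proof -
  obtain m where m: "\<And>n. m n \<le> 2^n" "\<And>n. u + real (m n) * h / 2^n \<in> {u..v}"
    and lim: "(\<lambda>n. u + real (m n) * h / 2^n) \<longlonglongrightarrow> v"
    using dyadic_approx_from_below[OF h v] by blast
  have \<delta>: "\<delta> n \<ge> 0" for n
    using inc[of 0 n] by (meson abs_ge_zero order_trans zero_less_numeral zero_less_power)
  have bound: "\<bar>f (u + real (m n) * h / 2^n) - f u\<bar> \<le> suminf \<delta>" for n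
  proof -
    have "\<bar>f (u + real (m n) * h / 2^n) - f u\<bar> \<le> (\<Sum>j\<le>n. \<delta> j)"
      by (rule dyadic_chain_bound[OF inc m(1)])
    also have "\<dots> \<le> suminf \<delta>"
      using sm \<delta> by (intro sum_le_suminf) auto
    finally show ?thesis .
  qed
  have "u + real (m n) * h / 2^n \<in> {u..u+h}" for n
    using m(2)[of n] v by auto
  then have "(\<lambda>n. f (u + real (m n) * h / 2^n)) \<longlonglongrightarrow> f v"
    by (intro continuous_on_tendsto_compose[OF cont lim v] always_eventually allI)
  then have "(\<lambda>n. \<bar>f (u + real (m n) * h / 2^n) - f u\<bar>) \<longlonglongrightarrow> \<bar>f v - f u\<bar>"
    by (intro tendsto_intros)
  then show ?thesis
    using bound by (intro tendsto_le[OF _ tendsto_const]) auto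
qed

definition small_dyadic_increments :: "(real \<Rightarrow> real) \<Rightarrow> real \<Rightarrow> real \<Rightarrow> real \<Rightarrow> bool" where
  "small_dyadic_increments f u h D \<longleftrightarrow>
     (\<forall>n k. k < (2::nat)^n \<longrightarrow> \<bar>f (u + real (k+1) * h / 2^n) - f (u + real k * h / 2^n)\<bar> < D/4 * (3/4)^n)"

lemma small_dyadic_increments_imp_osc:
  assumes "small_dyadic_increments f u h D" "h > 0" "continuous_on {u..u+h} f" "v \<in> {u..u+h}"
  shows "\<bar>f v - f u\<bar> \<le> D"
proof -
  have "(\<lambda>n. D/4 * (3/4::real)^n) sums (D/4 * (1 / (1 - 3/4)))"
    by (intro sums_mult geometric_sums) simp
  then have "summable (\<lambda>n. D/4 * (3/4::real)^n)" "suminf (\<lambda>n. D/4 * (3/4::real)^n) = D"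
    by (auto simp: sums_iff)
  then show ?thesis
    using continuous_dyadic_increments_bound[of h u f "\<lambda>n. D/4 * (3/4)^n" v] assms
    unfolding small_dyadic_increments_def by (auto intro: less_imp_le)
qed

lemma two_pow_exp_le_geometric:
  fixes r :: real
  assumes "0 \<le> r"
  shows "2^n * exp (- r * (9/8)^n) \<le> exp (- r) * (2 * exp (- r / 8))^n"
proof -
  have "1 + real n * (1/8) \<le> (1 + 1/8 :: real)^n" by (rule Bernoulli_inequality) simp
  then have "r * (1 + real n / 8) \<le> r * (9/8)^n" using assms by (intro mult_left_mono) auto
  then have "exp (- r * (9/8)^n) \<le> exp (- r + real n * (- r / 8))" by (simp add: algebra_simps)
  also have "\<dots> = exp (- r) * exp (- r / 8) ^ n" by (simp only: exp_add exp_of_nat_mult)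
  finally show ?thesis by (simp add: power_mult_distrib)
qed

lemma not_small_dyadic_increments_sets:
  assumes bm: "standard_BM M W" and u: "u \<ge> 0" and h: "h > 0"
  shows "{\<omega> \<in> space M. \<not> small_dyadic_increments (\<lambda>t. W t \<omega>) u h D} \<in> sets M"
proof -
  have [measurable]: "W t \<in> borel_measurable M" if "t \<ge> 0" for t
    using standard_BM_measurable bm that by auto
  have "{\<omega> \<in> space M. \<not> small_dyadic_increments (\<lambda>t. W t \<omega>) u h D} = (\<Union>n. \<Union>k\<in>{..<(2::nat)^n}.
      {\<omega> \<in> space M. D/4 * (3/4)^n \<le> \<bar>W (u + real (k+1) * h / 2^n) \<omega> - W (u + real k * h / 2^n) \<omega>\<bar>})"
    unfolding small_dyadic_increments_def not_all not_imp not_less by blast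
  also have "\<dots> \<in> sets M"
    using u h by (intro sets.countable_UN sets.finite_UN) (auto intro!: sets.sets_Collect_countable_Ex)
  finally show ?thesis .
qed

lemma prob_large_dyadic_increment_at_level:
  assumes bm: "standard_BM M W" and u: "u \<ge> 0" and h: "h > 0" and D: "D \<ge> 0"
  shows "measure M (\<Union>k\<in>{..<(2::nat)^n}. {\<omega> \<in> space M.
             D/4 * (3/4)^n \<le> \<bar>W (u + real (k+1) * h / 2^n) \<omega> - W (u + real k * h / 2^n) \<omega>\<bar>})
           \<le> 2 * (2^n * exp (- (D\<^sup>2 / (32 * h)) * (9/8)^n))"
proof -
  have [measurable]: "W t \<in> borel_measurable M" if "t \<ge> 0" for t
    using standard_BM_measurable bm that by auto
  have "measure M (\<Union>k\<in>{..<(2::nat)^n}. {\<omega> \<in> space M.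
             D/4 * (3/4)^n \<le> \<bar>W (u + real (k+1) * h / 2^n) \<omega> - W (u + real k * h / 2^n) \<omega>\<bar>})
      \<le> (\<Sum>k\<in>{..<(2::nat)^n}. measure M {\<omega> \<in> space M.
             D/4 * (3/4)^n \<le> \<bar>W (u + real (k+1) * h / 2^n) \<omega> - W (u + real k * h / 2^n) \<omega>\<bar>})"
    using u h by (intro measure_UNION_le) (auto intro!: sets.sets_Collect_countable_Ex)
  also have "\<dots> \<le> (\<Sum>k\<in>{..<(2::nat)^n}. 2 * exp (- (D/4 * (3/4)^n)\<^sup>2
                   / (2 * ((u + real (k+1) * h / 2^n) - (u + real k * h / 2^n)))))"
    using u h D by (intro sum_mono standard_BM_increment_abs_ge[OF bm]) (auto simp: divide_strict_right_mono)
  also have "\<dots> = 2 * (2^n * exp (- (D\<^sup>2 / (32 * h)) * (9/8)^n))"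
  proof -
    have "(u + real (k+1) * h / 2^n) - (u + real k * h / 2^n) = h / 2^n" for k
      by (simp add: field_simps)
    moreover have "(D/4 * (3/4)^n)\<^sup>2 / (2 * (h / 2^n)) = D\<^sup>2 / (32 * h) * (9/8)^n"
      using h by (simp add: field_simps power2_eq_square power_mult_distrib[symmetric])
    ultimately show ?thesis by simp
  qed
  finally show ?thesis .
qed

lemma prob_not_small_dyadic_increments:
  assumes bm: "standard_BM M W" and u: "u \<ge> 0" and h: "h > 0" and D: "D \<ge> 0"
    and r: "16 \<le> D\<^sup>2 / (32 * h)"
  shows "measure M {\<omega> \<in> space M. \<not> small_dyadic_increments (\<lambda>t. W t \<omega>) u h D}
           \<le> 6 * exp (- (D\<^sup>2 / (32 * h)))"
proof -
  define r where "r = D\<^sup>2 / (32 * h)"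
  interpret prob_space M using standard_BM_prob_space[OF bm] .
  have [measurable]: "W t \<in> borel_measurable M" if "t \<ge> 0" for t
    using standard_BM_measurable bm that by auto
  define B where "B n = (\<Union>k\<in>{..<(2::nat)^n}. {\<omega> \<in> space M.
      D/4 * (3/4)^n \<le> \<bar>W (u + real (k+1) * h / 2^n) \<omega> - W (u + real k * h / 2^n) \<omega>\<bar>})" for n
  have B_sets: "B n \<in> events" for n
    unfolding B_def using u h by (intro sets.finite_UN) (auto intro!: sets.sets_Collect_countable_Ex)
  define q where "q = 2 * exp (- r / 8)"
  have q: "0 \<le> q" "q \<le> 2/3"
  proof -
    have "exp (- r / 8) \<le> exp (-2)" using r unfolding r_def by simp
    also have "exp (-2::real) \<le> 1 / 3"
      using exp_ge_add_one_self[of "2::real"] by (simp add: exp_minus divide_le_eq field_simps)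
    finally show "q \<le> 2/3" "0 \<le> q" unfolding q_def by auto
  qed
  define g where "g n = 2 * exp (- r) * q^n" for n
  have B_le: "prob (B n) \<le> g n" for n
  proof -
    have "prob (B n) \<le> 2 * (2^n * exp (- r * (9/8)^n))"
      unfolding B_def r_def by (rule prob_large_dyadic_increment_at_level[OF bm u h D])
    also have "\<dots> \<le> g n"
      using two_pow_exp_le_geometric[of r n] r unfolding g_def q_def r_def by simp
    finally show ?thesis .
  qed
  have g_sums: "g sums (2 * exp (- r) * (1 / (1 - q)))"
    unfolding g_def using q by (intro sums_mult geometric_sums) auto
  have B_summable: "summable (\<lambda>n. prob (B n))"
    by (rule summable_comparison_test'[of g 0]) (use g_sums B_le in \<open>auto simp: sums_iff\<close>)
  have "{\<omega> \<in> space M. \<not> small_dyadic_increments (\<lambda>t. W t \<omega>) u h D} \<subseteq> (\<Union>n. B n)"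
    unfolding small_dyadic_increments_def B_def not_all not_imp not_less by blast
  then have "prob {\<omega> \<in> space M. \<not> small_dyadic_increments (\<lambda>t. W t \<omega>) u h D} \<le> prob (\<Union>n. B n)"
    using B_sets by (intro finite_measure_mono) auto
  also have "\<dots> \<le> (\<Sum>n. prob (B n))"
    using B_sets B_summable by (intro finite_measure_subadditive_countably) auto
  also have "\<dots> \<le> 2 * exp (- r) * (1 / (1 - q))"
    using suminf_le[OF B_le B_summable] g_sums by (simp add: sums_iff)
  also have "\<dots> \<le> 2 * exp (- r) * 3"
    using q by (intro mult_left_mono) (auto simp: divide_le_eq)
  finally show ?thesis unfolding r_def by simp
qed

section \<open>Paths of the reflected system\<close>

lemma hitting_time_attained:
  fixes f :: "real \<Rightarrow> real"
  assumes c: "continuous_on {0..} f" and ne: "{t. 0 \<le> t \<and> f t = z} \<noteq> {}"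
  shows "Inf {t. 0 \<le> t \<and> f t = z} \<in> {t. 0 \<le> t \<and> f t = z}"
    and "Inf (ereal ` {t. 0 \<le> t \<and> f t = z}) = ereal (Inf {t. 0 \<le> t \<and> f t = z})"
proof -
  have "{t. 0 \<le> t \<and> f t = z} = {0..} \<inter> f -` {z}" by auto
  then have cl: "closed {t. 0 \<le> t \<and> f t = z}"
    using continuous_closed_preimage[OF c] by auto
  have bb: "bdd_below {t. 0 \<le> t \<and> f t = z}" by (rule bdd_belowI[of _ 0]) auto
  show "Inf {t. 0 \<le> t \<and> f t = z} \<in> {t. 0 \<le> t \<and> f t = z}"
    by (rule closed_contains_Inf[OF ne bb cl])
  show "Inf (ereal ` {t. 0 \<le> t \<and> f t = z}) = ereal (Inf {t. 0 \<le> t \<and> f t = z})"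
    using ereal_Inf'[OF bb ne] by simp
qed

lemma ge_before_hitting_time:
  fixes f :: "real \<Rightarrow> real"
  assumes c: "continuous_on {0..} f" and f0: "z < f 0" and t: "0 \<le> t"
    and before: "ereal t \<le> Inf (ereal ` {t. 0 \<le> t \<and> f t = z})"
  shows "z \<le> f t"
proof (rule ccontr)
  assume "\<not> z \<le> f t"
  moreover have "continuous_on {0..t} f" using c by (rule continuous_on_subset) auto
  ultimately obtain s where s: "0 \<le> s" "s \<le> t" "f s = z"
    using IVT2'[of f t z 0] f0 t by force
  with \<open>\<not> z \<le> f t\<close> have "s < t" by (cases "s = t") auto
  have "Inf (ereal ` {t. 0 \<le> t \<and> f t = z}) \<le> ereal s"
    using s by (intro INF_lower) auto
  with before have "ereal t \<le> ereal s" by (rule order_trans)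
  with \<open>s < t\<close> show False by simp
qed

text \<open>The hypothesis \<open>null\<close> says that \<open>l\<close> increases only at times where \<open>q \<ge> 0\<close>.\<close>
lemma regulator_flat_where_negative:
  fixes l q :: "real \<Rightarrow> real"
  assumes mono: "mono_on {0..} l" and cad: "cadlag_on_nonneg l"
    and null: "(\<integral>\<^sup>+ t. indicator {t. 0 \<le> t \<and> q t < 0} t \<partial>interval_measure (\<lambda>t. l (max 0 t))) = 0"
    and ab: "0 \<le> a" "a < b" and neg: "\<And>t. t \<in> {a<..b} \<Longrightarrow> q t < 0"
  shows "l b = l a"
proof -
  define F where "F t = l (max 0 t)" for t
  have F_mono: "F x \<le> F y" if "x \<le> y" for x y
    unfolding F_def using mono that by (auto simp: mono_on_def)
  have F_right: "continuous (at_right x) F" for x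
  proof (cases "0 \<le> x")
    case True
    have "(l \<longlongrightarrow> l x) (at_right x)"
      using cad True unfolding cadlag_on_nonneg_def by (auto simp: continuous_within)
    moreover have "\<forall>\<^sub>F t in at_right x. l t = F t"
      using eventually_at_right_less[of x] by eventually_elim (use True in \<open>auto simp: F_def\<close>)
    ultimately have "(F \<longlongrightarrow> F x) (at_right x)"
      using True Lim_transform_eventually by (fastforce simp: F_def)
    then show ?thesis by (simp add: continuous_within)
  next
    case False
    have "\<forall>\<^sub>F t in at_right x. t < 0"
      using False unfolding eventually_at_right_field by (intro exI[of _ 0]) auto
    then have "\<forall>\<^sub>F t in at_right x. F x = F t"
      by eventually_elim (use False in \<open>auto simp: F_def\<close>)
    then have "(F \<longlongrightarrow> F x) (at_right x)"
      by (rule tendsto_eventually[OF eventually_mono]) auto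
    then show ?thesis by (simp add: continuous_within)
  qed
  have "ennreal (F b - F a) = emeasure (interval_measure F) {a<..b}"
    using ab F_mono F_right by (intro emeasure_interval_measure_Ioc[symmetric]) auto
  also have "\<dots> = (\<integral>\<^sup>+ t. indicator {a<..b} t \<partial>interval_measure F)"
    by simp
  also have "\<dots> \<le> (\<integral>\<^sup>+ t. indicator {t. 0 \<le> t \<and> q t < 0} t \<partial>interval_measure F)"
    using neg ab by (intro nn_integral_mono) (auto split: split_indicator)
  also have "\<dots> = 0" using null unfolding F_def by simp
  finally have "F b \<le> F a" by (simp add: ennreal_eq_0_iff)
  with F_mono[of a b] ab show ?thesis unfolding F_def by simp
qed

text \<open>A single sample path of \<open>reflected_solution\<close> started at \<open>(0, y)\<close>.\<close>
definition reflected_path ::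
  "real \<Rightarrow> real \<Rightarrow> (real \<Rightarrow> real) \<Rightarrow> (real \<Rightarrow> real) \<Rightarrow> (real \<Rightarrow> real) \<Rightarrow> (real \<Rightarrow> real) \<Rightarrow> bool" where
  "reflected_path \<beta> y w q1 q2 l \<longleftrightarrow>
     continuous_on {0..} q1 \<and> continuous_on {0..} q2 \<and>
     (\<forall>t\<ge>0. q1 t = sqrt 2 * w t - \<beta> * t + integral {0..t} (\<lambda>s. - q1 s + q2 s) - l t) \<and>
     (\<forall>t\<ge>0. q2 t = y + l t - integral {0..t} q2) \<and>
     l 0 = 0 \<and> mono_on {0..} l \<and> cadlag_on_nonneg l \<and> (\<forall>t\<ge>0. q1 t \<le> 0) \<and>
     (\<integral>\<^sup>+ t. indicator {t. 0 \<le> t \<and> q1 t < 0} t \<partial>interval_measure (\<lambda>t. l (max 0 t))) = 0"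

lemma AE_reflected_path:
  assumes "reflected_solution M \<beta> 0 y W Q1 Q2 L"
  shows "AE \<omega> in M. reflected_path \<beta> y (\<lambda>t. W t \<omega>) (\<lambda>t. Q1 t \<omega>) (\<lambda>t. Q2 t \<omega>) (\<lambda>t. L t \<omega>)"
  using assms unfolding reflected_solution_def reflected_path_def by eventually_elim auto

lemma reflected_pathD:
  assumes "reflected_path \<beta> y w q1 q2 l"
  shows "continuous_on {0..} q1" "continuous_on {0..} q2"
    "\<And>t. 0 \<le> t \<Longrightarrow> q1 t = sqrt 2 * w t - \<beta> * t + integral {0..t} (\<lambda>s. - q1 s + q2 s) - l t"
    "\<And>t. 0 \<le> t \<Longrightarrow> q2 t = y + l t - integral {0..t} q2"
    "l 0 = 0" "mono_on {0..} l" "cadlag_on_nonneg l" "\<And>t. 0 \<le> t \<Longrightarrow> q1 t \<le> 0"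
    "(\<integral>\<^sup>+ t. indicator {t. 0 \<le> t \<and> q1 t < 0} t \<partial>interval_measure (\<lambda>t. l (max 0 t))) = 0"
  using assms unfolding reflected_path_def by blast+

lemma reflected_path_at_0:
  assumes "reflected_path \<beta> y w q1 q2 l"
  shows "q1 0 = sqrt 2 * w 0" "q2 0 = y"
  using reflected_pathD(3)[OF assms, of 0] reflected_pathD(4)[OF assms, of 0] reflected_pathD(5)[OF assms]
  by simp_all

lemma last_zero_before:
  fixes f :: "real \<Rightarrow> real"
  assumes cont: "continuous_on {0..t1} f" and f0: "f 0 = 0" and ft1: "f t1 \<noteq> 0" and t1: "0 \<le> t1"
    and nonpos: "\<And>t. t \<in> {0..t1} \<Longrightarrow> f t \<le> 0"
  obtains \<sigma> where "0 \<le> \<sigma>" "\<sigma> < t1" "f \<sigma> = 0" "\<And>t. t \<in> {\<sigma><..t1} \<Longrightarrow> f t < 0"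
proof -
  define Z where "Z = {t. 0 \<le> t \<and> t \<le> t1 \<and> f t = 0}"
  have "Z = {0..t1} \<inter> f -` {0}" unfolding Z_def by auto
  with cont have Z_closed: "closed Z" by (auto intro: continuous_closed_preimage)
  have Z_ne: "Z \<noteq> {}" using f0 t1 unfolding Z_def by auto
  have Z_bdd: "bdd_above Z" unfolding Z_def by (rule bdd_aboveI[of _ t1]) auto
  define \<sigma> where "\<sigma> = Sup Z"
  have "\<sigma> \<in> Z" unfolding \<sigma>_def by (rule closed_contains_Sup[OF Z_ne Z_bdd Z_closed])
  then have \<sigma>: "0 \<le> \<sigma>" "\<sigma> \<le> t1" "f \<sigma> = 0" unfolding Z_def by auto
  with ft1 have "\<sigma> < t1" by (cases "\<sigma> = t1") auto
  moreover have "f t < 0" if t: "t \<in> {\<sigma><..t1}" for t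
  proof -
    have "t \<notin> Z" using t cSup_upper[OF _ Z_bdd, of t] unfolding \<sigma>_def by auto
    then show ?thesis using nonpos[of t] t \<sigma> unfolding Z_def by force
  qed
  ultimately show ?thesis using \<sigma> that by blast
qed

lemma reflected_path_noise_drop:
  assumes rp: "reflected_path \<beta> y w q1 q2 l" and w0: "w 0 = 0" and \<beta>: "\<beta> > 0"
    and t1: "0 \<le> t1" "q1 t1 = - \<beta> / 2" and q2_ge: "\<And>s. s \<in> {0..t1} \<Longrightarrow> c \<le> q2 s"
  shows "\<exists>\<sigma>. 0 \<le> \<sigma> \<and> \<sigma> < t1 \<and> \<beta> / 2 + (c - \<beta>) * (t1 - \<sigma>) \<le> sqrt 2 * (w \<sigma> - w t1)"
proof -
  note rp' = reflected_pathD[OF rp]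
  have cont: "continuous_on {0..t1} q1" "continuous_on {0..t1} q2"
    using rp'(1,2) by (auto intro: continuous_on_subset)
  have "q1 0 = 0" "q1 t1 \<noteq> 0" using reflected_path_at_0[OF rp] w0 t1(2) \<beta> by simp_all
  moreover have "q1 t \<le> 0" if "t \<in> {0..t1}" for t using rp'(8) that by simp
  ultimately obtain \<sigma> where \<sigma>: "0 \<le> \<sigma>" "\<sigma> < t1" "q1 \<sigma> = 0"
    and neg: "\<And>t. t \<in> {\<sigma><..t1} \<Longrightarrow> q1 t < 0"
    using last_zero_before[OF cont(1) _ _ t1(1)] by blast
  from rp'(6,7,9) \<sigma>(1,2) neg have l_flat: "l t1 = l \<sigma>"
    by (rule regulator_flat_where_negative)
  define g where "g s = - q1 s + q2 s" for s
  have g_cont: "continuous_on {0..t1} g"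
    unfolding g_def using cont by (intro continuous_intros)
  have "integral {0..\<sigma>} g + integral {\<sigma>..t1} g = integral {0..t1} g"
    using integrable_continuous_interval[OF g_cont] \<sigma>
    by (intro Henstock_Kurzweil_Integration.integral_combine) auto
  moreover have "(t1 - \<sigma>) * c \<le> integral {\<sigma>..t1} g"
  proof -
    have "integral {\<sigma>..t1} (\<lambda>_. c) \<le> integral {\<sigma>..t1} g"
    proof (rule integral_le)
      show "g integrable_on {\<sigma>..t1}"
        using g_cont \<sigma> by (intro integrable_continuous_interval) (auto intro: continuous_on_subset)
      show "c \<le> g s" if "s \<in> {\<sigma>..t1}" for s
        using q2_ge[of s] rp'(8)[of s] that \<sigma> unfolding g_def by auto
    qed auto
    then show ?thesis using \<sigma>(2) by simp
  qed
  moreover have "q1 t1 = sqrt 2 * w t1 - \<beta> * t1 + integral {0..t1} g - l t1"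
    using rp'(3)[OF t1(1)] unfolding g_def .
  moreover have "q1 \<sigma> = sqrt 2 * w \<sigma> - \<beta> * \<sigma> + integral {0..\<sigma>} g - l \<sigma>"
    using rp'(3)[OF \<sigma>(1)] unfolding g_def .
  moreover have "(c - \<beta>) * (t1 - \<sigma>) = (t1 - \<sigma>) * c - \<beta> * t1 + \<beta> * \<sigma>"
    by (simp add: algebra_simps)
  ultimately have "\<beta> / 2 + (c - \<beta>) * (t1 - \<sigma>) \<le> sqrt 2 * w \<sigma> - sqrt 2 * w t1"
    using \<sigma>(3) t1(2) l_flat by linarith
  then show ?thesis
    using \<sigma>(1) \<sigma>(2) by (intro exI[of _ \<sigma>]) (simp add: right_diff_distrib)
qed

lemma reflected_path_noise_large:
  assumes rp: "reflected_path \<beta> y w q1 q2 l" and T: "0 \<le> T"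
    and q1_ge: "\<And>t. t \<in> {0..T} \<Longrightarrow> a \<le> q1 t" and q2_ge: "c \<le> q2 T"
  shows "a + (\<beta> + a) * T + c - y \<le> sqrt 2 * w T"
proof -
  note rp' = reflected_pathD[OF rp]
  have int: "q1 integrable_on {0..T}" "q2 integrable_on {0..T}"
    using rp'(1,2) by (auto intro!: integrable_continuous_interval intro: continuous_on_subset)
  have "integral {0..T} (\<lambda>_. a) \<le> integral {0..T} q1"
    using int q1_ge by (intro integral_le) auto
  then have int_q1: "a * T \<le> integral {0..T} q1"
    using T by (simp add: mult.commute)
  have "integral {0..T} (\<lambda>s. - q1 s + q2 s) = - integral {0..T} q1 + integral {0..T} q2"
    using int by (simp add: Henstock_Kurzweil_Integration.integral_diff)
  then have "q1 T = sqrt 2 * w T - \<beta> * T - integral {0..T} q1 + integral {0..T} q2 - l T"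
    using rp'(3)[OF T] by simp
  moreover have "q2 T = y + l T - integral {0..T} q2"
    using rp'(4)[OF T] .
  moreover have "(\<beta> + a) * T = \<beta> * T + a * T"
    by (simp add: distrib_right)
  moreover have "a \<le> q1 T" using q1_ge T by simp
  ultimately show ?thesis
    using q2_ge int_q1 by linarith
qed

lemma le_sqrt2_mult_imp:
  fixes a d :: real
  assumes "0 \<le> a" "a \<le> sqrt 2 * d"
  shows "2 / 3 * a \<le> d"
proof -
  have "0 \<le> sqrt 2 * d" using assms by linarith
  then have "0 \<le> d" by (simp add: zero_le_mult_iff)
  moreover have "sqrt 2 \<le> 3 / 2" by (rule real_le_lsqrt) (auto simp: power2_eq_square)
  ultimately have "sqrt 2 * d \<le> 3 / 2 * d" by (rule mult_right_mono[rotated])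
  with assms show ?thesis by simp
qed

lemma reflected_path_hit_order:
  assumes rp: "reflected_path \<beta> (y + \<beta>) w q1 q2 l" and w0: "w 0 = 0"
    and \<beta>: "\<beta> > 0" and y: "y > 0" and T: "0 \<le> T"
    and hit: "Inf (ereal ` {t. 0 \<le> t \<and> q1 t = - \<beta> / 2}) \<le> Inf (ereal ` {t. 0 \<le> t \<and> q2 t = y / 2 + \<beta>})"
  shows "(\<exists>s t. 0 \<le> s \<and> s < t \<and> t \<le> T \<and> (\<beta> + y * (t - s)) / 3 \<le> w s - w t)
         \<or> (\<beta> * T - y - \<beta>) / 2 \<le> sqrt 2 * w T"
proof -
  define \<tau>1 where "\<tau>1 = Inf (ereal ` {t. 0 \<le> t \<and> q1 t = - \<beta> / 2})"
  note cont = reflected_pathD(1,2)[OF rp]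
  have q2_ge: "y / 2 + \<beta> \<le> q2 t" if "0 \<le> t" "ereal t \<le> \<tau>1" for t
    using ge_before_hitting_time[OF cont(2), of "y / 2 + \<beta>" t] hit reflected_path_at_0[OF rp] y that
    unfolding \<tau>1_def by simp
  show ?thesis
  proof (cases "\<tau>1 \<le> ereal T")
    case True
    have "{t. 0 \<le> t \<and> q1 t = - \<beta> / 2} \<noteq> {}"
    proof
      assume "{t. 0 \<le> t \<and> q1 t = - \<beta> / 2} = {}"
      then have "\<tau>1 = \<infinity>" unfolding \<tau>1_def by (simp add: top_ereal_def del: Collect_empty_eq)
      with True show False by simp
    qed
    from hitting_time_attained[OF cont(1) this] obtain t1
      where t1: "0 \<le> t1" "q1 t1 = - \<beta> / 2" and \<tau>1: "\<tau>1 = ereal t1"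
      unfolding \<tau>1_def by auto
    obtain \<sigma> where \<sigma>: "0 \<le> \<sigma>" "\<sigma> < t1"
      and drop: "\<beta> / 2 + (y / 2 + \<beta> - \<beta>) * (t1 - \<sigma>) \<le> sqrt 2 * (w \<sigma> - w t1)"
      using reflected_path_noise_drop[OF rp w0 \<beta> t1, of "y / 2 + \<beta>"] q2_ge \<tau>1 by auto
    have "2 / 3 * (\<beta> / 2 + y / 2 * (t1 - \<sigma>)) \<le> w \<sigma> - w t1"
      using drop \<beta> y \<sigma> by (intro le_sqrt2_mult_imp) auto
    then have "(\<beta> + y * (t1 - \<sigma>)) / 3 \<le> w \<sigma> - w t1"
      by (simp add: field_simps)
    then show ?thesis using \<sigma> t1 True \<tau>1 by auto
  next
    case False
    then have before: "ereal t \<le> \<tau>1" if "t \<le> T" for t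
      using that order_trans[of "ereal t" "ereal T" \<tau>1] by simp
    have "- \<beta> / 2 \<le> q1 t" if "t \<in> {0..T}" for t
      using ge_before_hitting_time[OF cont(1), of "- \<beta> / 2" t] reflected_path_at_0[OF rp] w0 \<beta>
        that before[of t] unfolding \<tau>1_def by simp
    from reflected_path_noise_large[OF rp T this, of "y / 2 + \<beta>"]
    have "(\<beta> * T - y - \<beta>) / 2 \<le> sqrt 2 * w T"
      using q2_ge[OF T before[of T]] by (simp add: field_simps)
    then show ?thesis ..
  qed
qed

section \<open>Discretization on a grid\<close>

lemma floor_grid_cell:
  fixes s h :: real
  assumes "0 \<le> s" "h > 0"
  shows "real (nat \<lfloor>s / h\<rfloor>) * h \<le> s" "s < real (nat \<lfloor>s / h\<rfloor>) * h + h"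
proof -
  define n where "n = nat \<lfloor>s / h\<rfloor>"
  have "real n = of_int \<lfloor>s / h\<rfloor>" using assms unfolding n_def by simp
  then have "real n \<le> s / h" "s / h < real n + 1" by linarith+
  then show "real n * h \<le> s" "s < real n * h + h"
    using assms by (simp_all add: pos_le_divide_eq pos_divide_less_eq distrib_right)
qed

lemma drop_between_grid_points:
  fixes w :: "real \<Rightarrow> real"
  assumes a: "a > 0" and b: "b \<ge> 0" and h: "h > 0" and bh: "b * h \<le> a / 4" and TN: "T \<le> real N * h"
    and osc: "\<And>i v. i \<le> N \<Longrightarrow> v \<in> {real i * h .. real i * h + h} \<Longrightarrow> \<bar>w v - w (real i * h)\<bar> \<le> a / 8"
    and st: "0 \<le> s" "s < t" "t \<le> T" and drop: "a + b * (t - s) \<le> w s - w t"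
  shows "\<exists>i\<le>N. \<exists>k\<in>{1..N}. a / 2 + b * (real k * h) \<le> w (real i * h) - w (real (i + k) * h)"
proof -
  define i where "i = nat \<lfloor>s / h\<rfloor>"
  define j where "j = nat \<lfloor>t / h\<rfloor>"
  have i: "real i * h \<le> s" "s < real i * h + h"
    unfolding i_def using floor_grid_cell[OF st(1) h] by auto
  have j: "real j * h \<le> t" "t < real j * h + h"
    unfolding j_def using floor_grid_cell[of t h] st h by auto
  have "real j * h \<le> real N * h" using j st TN by linarith
  then have jN: "j \<le> N" using h by simp
  have "real i * h < (real j + 1) * h" using i j st by (simp add: distrib_right)
  then have ij: "i \<le> j" using h by simp
  have "\<bar>w s - w (real i * h)\<bar> \<le> a / 8" "\<bar>w t - w (real j * h)\<bar> \<le> a / 8"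
    using osc[of i s] osc[of j t] i j ij jN by auto
  then have main: "3 * a / 4 + b * (t - s) \<le> w (real i * h) - w (real j * h)"
    using drop by linarith
  have "0 \<le> b * (t - s)" using b st by simp
  then have "i \<noteq> j" using main a by auto
  then obtain k where k: "j = i + k" "1 \<le> k" using ij by (metis le_iff_add less_one not_le add_0_right)
  have "real k * h - h \<le> t - s" using i j k(1) by (simp add: algebra_simps)
  then have "b * (real k * h) - b * h \<le> b * (t - s)"
    using mult_left_mono[OF _ b] by (fastforce simp: right_diff_distrib)
  moreover have "3 * a / 4 + b * (t - s) \<le> w (real i * h) - w (real (i + k) * h)"
    using main k(1) by simp
  ultimately have "a / 2 + b * (real k * h) \<le> w (real i * h) - w (real (i + k) * h)"
    using bh by linarith
  moreover have "i \<le> N" "k \<in> {1..N}" using ij jN k by auto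
  ultimately show ?thesis by blast
qed

lemma hit_order_imp_grid_events:
  assumes rp: "reflected_path \<beta> (y + \<beta>) w q1 q2 l" and w0: "w 0 = 0" and cw: "continuous_on {0..} w"
    and \<beta>: "\<beta> > 0" and y: "y > 0" and h: "h = \<beta> / (4608 * y)"
    and T: "T = 2 * (y + \<beta>) / \<beta>" and TN: "T \<le> real N * h"
    and hit: "Inf (ereal ` {t. 0 \<le> t \<and> q1 t = - \<beta> / 2}) \<le> Inf (ereal ` {t. 0 \<le> t \<and> q2 t = y / 2 + \<beta>})"
  shows "(y + \<beta>) / 3 \<le> w T
    \<or> (\<exists>i\<le>N. \<not> small_dyadic_increments w (real i * h) h (\<beta> / 24))
    \<or> (\<exists>i\<le>N. \<exists>k\<in>{1..N}. \<beta> / 6 + y / 3 * (real k * h) \<le> w (real i * h) - w (real (i + k) * h))"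
proof -
  have h_pos: "h > 0" using h \<beta> y by simp
  have "0 \<le> T" using T \<beta> y by simp
  from reflected_path_hit_order[OF rp w0 \<beta> y this hit]
  consider (drop) s t where "0 \<le> s" "s < t" "t \<le> T" "(\<beta> + y * (t - s)) / 3 \<le> w s - w t"
    | (final) "(\<beta> * T - y - \<beta>) / 2 \<le> sqrt 2 * w T"
    by blast
  then show ?thesis
  proof cases
    case drop
    show ?thesis
    proof (cases "\<forall>i\<le>N. small_dyadic_increments w (real i * h) h (\<beta> / 24)")
      case True
      have "\<bar>w v - w (real i * h)\<bar> \<le> \<beta> / 3 / 8"
        if "i \<le> N" "v \<in> {real i * h .. real i * h + h}" for i v
        using small_dyadic_increments_imp_osc[of w "real i * h" h "\<beta> / 24" v] True that h_pos
          continuous_on_subset[OF cw, of "{real i * h .. real i * h + h}"] by auto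
      moreover have "y / 3 * h \<le> \<beta> / 3 / 4" using h \<beta> y by (simp add: field_simps)
      moreover have "\<beta> / 3 + y / 3 * (t - s) \<le> w s - w t" using drop(4) by (simp add: field_simps)
      ultimately have "\<exists>i\<le>N. \<exists>k\<in>{1..N}. \<beta> / 3 / 2 + y / 3 * (real k * h) \<le> w (real i * h) - w (real (i + k) * h)"
        using drop_between_grid_points[of "\<beta> / 3" "y / 3" h T N w s t] \<beta> y h_pos TN drop(1-3) by auto
      then show ?thesis by auto
    qed auto
  next
    case final
    have "\<beta> * T - y - \<beta> = y + \<beta>" using T \<beta> by simp
    then have "2 / 3 * ((y + \<beta>) / 2) \<le> w T"
      using final \<beta> y by (intro le_sqrt2_mult_imp) auto
    then show ?thesis by auto
  qed
qed

lemma gaussian_exponent_split: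
  fixes a b x :: real
  assumes "x > 0" "a \<ge> 0" "b \<ge> 0"
  shows "3 * a * b / 4 + b\<^sup>2 * x / 4 \<le> (a / 2 + b * x)\<^sup>2 / (2 * x)"
proof -
  have "(a / 2 + b * x)\<^sup>2 - 2 * x * (3 * a * b / 4 + b\<^sup>2 * x / 4) = (a / 2 - b * x / 2)\<^sup>2 + b\<^sup>2 * x\<^sup>2 / 4"
    by (simp add: power2_eq_square algebra_simps)
  also have "\<dots> \<ge> 0" by simp
  finally show ?thesis using assms by (simp add: le_divide_eq mult.commute)
qed

lemma exp_neg_nat_le_half_power: "exp (- real k) \<le> (1/2::real)^k"
proof -
  have "2 \<le> exp (1::real)" using exp_ge_add_one_self[of "1::real"] by simp
  then have "exp (-1::real) \<le> 1/2" by (simp add: exp_minus field_simps)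
  then have "exp (-1::real) ^ k \<le> (1/2)^k" by (intro power_mono) auto
  then show ?thesis using exp_of_nat_mult[of k "-1::real"] by simp
qed

lemma sum_power_half_le_1: "(\<Sum>k\<in>{1..n}. (1/2::real)^k) \<le> 1"
proof -
  have "(\<Sum>k\<in>{1..n}. (1/2::real)^k) = 1 - (1/2)^n"
    by (induction n) (auto simp: field_simps)
  then show ?thesis by simp
qed

lemma prob_grid_drop:
  assumes bm: "standard_BM M W" and \<beta>: "\<beta> > 0" and y: "y > 0" and h: "h = \<beta> / (4608 * y)"
    and large: "165888 \<le> \<beta> * y" and k: "1 \<le> k"
  shows "measure M {\<omega> \<in> space M. \<beta> / 6 + y / 3 * (real k * h) \<le> W (real i * h) \<omega> - W (real (i + k) * h) \<omega>}
           \<le> exp (- (\<beta> * y) / 12) * (1/2)^k"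
proof -
  define c where "c = \<beta> / 3 / 2 + y / 3 * (real k * h)"
  have h_pos: "0 < h" using h \<beta> y by simp
  then have kh: "0 < real k * h" using k by simp
  have "measure M {\<omega> \<in> space M. \<beta> / 6 + y / 3 * (real k * h) \<le> W (real i * h) \<omega> - W (real (i + k) * h) \<omega>}
      = measure M {\<omega> \<in> space M. W (real (i + k) * h) \<omega> - W (real i * h) \<omega> \<le> - c}"
    unfolding c_def by (intro arg_cong[where f = "measure M"]) auto
  also have "\<dots> \<le> exp (- c\<^sup>2 / (2 * (real (i + k) * h - real i * h)))"
    using h_pos kh \<beta> y unfolding c_def by (intro standard_BM_increment_le[OF bm]) (auto simp: distrib_right)
  also have "\<dots> = exp (- (c\<^sup>2 / (2 * (real k * h))))"
    by (simp add: algebra_simps)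
  also have "\<dots> \<le> exp (- (\<beta> * y / 12 + real k))"
  proof -
    have "3 * (\<beta> / 3) * (y / 3) / 4 + (y / 3)\<^sup>2 * (real k * h) / 4 \<le> c\<^sup>2 / (2 * (real k * h))"
      unfolding c_def using kh \<beta> y by (intro gaussian_exponent_split) auto
    moreover have "(y / 3)\<^sup>2 * (real k * h) / 4 = real k * (\<beta> * y / 165888)"
      unfolding h using y by (simp add: field_simps power2_eq_square)
    moreover have "real k \<le> real k * (\<beta> * y / 165888)"
      using large by (intro mult_le_cancel_left1[THEN iffD2]) auto
    ultimately show ?thesis by simp
  qed
  also have "\<dots> = exp (- (\<beta> * y) / 12) * exp (- real k)"
    by (simp add: exp_add[symmetric])
  also have "\<dots> \<le> exp (- (\<beta> * y) / 12) * (1/2)^k"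
    by (intro mult_left_mono exp_neg_nat_le_half_power) auto
  finally show ?thesis .
qed

lemma prob_grid_oscillations:
  assumes bm: "standard_BM M W" and \<beta>: "\<beta> > 0" and y: "y > 0" and h: "h = \<beta> / (4608 * y)"
    and large: "64 \<le> \<beta> * y"
  shows "measure M (\<Union>i\<le>N. {\<omega> \<in> space M. \<not> small_dyadic_increments (\<lambda>t. W t \<omega>) (real i * h) h (\<beta> / 24)})
           \<le> (real N + 1) * (6 * exp (- (\<beta> * y) / 4))"
proof -
  have h_pos: "h > 0" using h \<beta> y by simp
  have r: "(\<beta> / 24)\<^sup>2 / (32 * h) = \<beta> * y / 4"
    unfolding h using \<beta> y by (simp add: field_simps power2_eq_square)
  have "measure M (\<Union>i\<le>N. {\<omega> \<in> space M. \<not> small_dyadic_increments (\<lambda>t. W t \<omega>) (real i * h) h (\<beta> / 24)})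
      \<le> (\<Sum>i\<le>N. measure M {\<omega> \<in> space M. \<not> small_dyadic_increments (\<lambda>t. W t \<omega>) (real i * h) h (\<beta> / 24)})"
    using h_pos by (intro measure_UNION_le not_small_dyadic_increments_sets[OF bm]) auto
  also have "\<dots> \<le> (\<Sum>i\<le>N. 6 * exp (- (\<beta> * y) / 4))"
    using h_pos \<beta> large prob_not_small_dyadic_increments[OF bm, of _ h "\<beta> / 24"]
    by (intro sum_mono) (simp add: r)
  finally show ?thesis by (simp add: add.commute)
qed

lemma prob_grid_drops:
  assumes bm: "standard_BM M W" and \<beta>: "\<beta> > 0" and y: "y > 0" and h: "h = \<beta> / (4608 * y)"
    and large: "165888 \<le> \<beta> * y"
  shows "measure M (\<Union>i\<le>N. \<Union>k\<in>{1..N}.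
           {\<omega> \<in> space M. \<beta> / 6 + y / 3 * (real k * h) \<le> W (real i * h) \<omega> - W (real (i + k) * h) \<omega>})
         \<le> (real N + 1) * exp (- (\<beta> * y) / 12)"
proof -
  have h_pos: "h > 0" using h \<beta> y by simp
  have [measurable]: "W (real i * h) \<in> borel_measurable M" for i :: nat
    using h_pos by (intro standard_BM_measurable[OF bm]) simp
  define D where "D i k = {\<omega> \<in> space M. \<beta> / 6 + y / 3 * (real k * h) \<le> W (real i * h) \<omega> - W (real (i + k) * h) \<omega>}"
    for i k :: nat
  have D_sets: "D i k \<in> sets M" for i k
    unfolding D_def by measurable
  have "measure M (\<Union>k\<in>{1..N}. D i k) \<le> exp (- (\<beta> * y) / 12)" for i
  proof -
    have "measure M (\<Union>k\<in>{1..N}. D i k) \<le> (\<Sum>k\<in>{1..N}. measure M (D i k))"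
      using D_sets by (intro measure_UNION_le) auto
    also have "\<dots> \<le> (\<Sum>k\<in>{1..N}. exp (- (\<beta> * y) / 12) * (1/2)^k)"
      unfolding D_def using prob_grid_drop[OF bm \<beta> y h large] by (intro sum_mono) auto
    also have "\<dots> \<le> exp (- (\<beta> * y) / 12) * 1"
      unfolding sum_distrib_left[symmetric] by (intro mult_left_mono sum_power_half_le_1) auto
    finally show ?thesis by simp
  qed
  then have "measure M (\<Union>i\<le>N. \<Union>k\<in>{1..N}. D i k) \<le> (\<Sum>i\<le>N. exp (- (\<beta> * y) / 12))"
    using D_sets by (intro order_trans[OF measure_UNION_le sum_mono]) auto
  then show ?thesis unfolding D_def by (simp add: add.commute)
qed

lemma AE_hit_order_imp_grid_events:
  assumes bm: "standard_BM M W" and rs: "reflected_solution M \<beta> 0 (y + \<beta>) W Q1 Q2 L"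
    and \<beta>: "\<beta> > 0" and y: "y > 0" and h: "h = \<beta> / (4608 * y)"
    and T: "T = 2 * (y + \<beta>) / \<beta>" and TN: "T \<le> real N * h"
  shows "AE \<omega> in M. hit_time Q1 (- \<beta> / 2) \<omega> \<le> hit_time Q2 (y / 2 + \<beta>) \<omega> \<longrightarrow>
    (y + \<beta>) / 3 \<le> W T \<omega> - W 0 \<omega>
    \<or> (\<exists>i\<le>N. \<not> small_dyadic_increments (\<lambda>t. W t \<omega>) (real i * h) h (\<beta> / 24))
    \<or> (\<exists>i\<le>N. \<exists>k\<in>{1..N}. \<beta> / 6 + y / 3 * (real k * h) \<le> W (real i * h) \<omega> - W (real (i + k) * h) \<omega>)"
proof -
  have "AE \<omega> in M. W 0 \<omega> = 0 \<and> continuous_on {0..} (\<lambda>t. W t \<omega>)"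
    using bm unfolding standard_BM_def by blast
  with AE_reflected_path[OF rs] show ?thesis
  proof eventually_elim
    case (elim \<omega>)
    then have W0: "W 0 \<omega> = 0" and cont: "continuous_on {0..} (\<lambda>t. W t \<omega>)" by auto
    show ?case
    proof
      assume "hit_time Q1 (- \<beta> / 2) \<omega> \<le> hit_time Q2 (y / 2 + \<beta>) \<omega>"
      from hit_order_imp_grid_events[OF elim(1) W0 cont \<beta> y h T TN this[unfolded hit_time_def]]
      show "(y + \<beta>) / 3 \<le> W T \<omega> - W 0 \<omega>
        \<or> (\<exists>i\<le>N. \<not> small_dyadic_increments (\<lambda>t. W t \<omega>) (real i * h) h (\<beta> / 24))
        \<or> (\<exists>i\<le>N. \<exists>k\<in>{1..N}. \<beta> / 6 + y / 3 * (real k * h) \<le> W (real i * h) \<omega> - W (real (i + k) * h) \<omega>)"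
        by (simp add: W0)
    qed
  qed
qed

lemma prob_hit_order_le:
  fixes M :: "'a measure"
  assumes bm: "standard_BM M W" and rs: "reflected_solution M \<beta> 0 (y + \<beta>) W Q1 Q2 L"
    and \<beta>: "\<beta> > 0" and y: "y > 0" and large: "165888 \<le> \<beta> * y"
  defines "N \<equiv> nat \<lceil>2 * (y + \<beta>) / \<beta> / (\<beta> / (4608 * y))\<rceil>"
  shows "measure M {\<omega> \<in> space M. hit_time Q1 (- \<beta> / 2) \<omega> \<le> hit_time Q2 (y / 2 + \<beta>) \<omega>}
    \<le> exp (- (\<beta> * y) / 36) + (real N + 1) * (6 * exp (- (\<beta> * y) / 4) + exp (- (\<beta> * y) / 12))"
proof -
  define h where "h = \<beta> / (4608 * y)"
  define T where "T = 2 * (y + \<beta>) / \<beta>"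
  have h_pos: "h > 0" and T_pos: "T > 0" using \<beta> y unfolding h_def T_def by auto
  have "T / h \<le> real N" unfolding N_def T_def h_def by linarith
  then have TN: "T \<le> real N * h" using h_pos by (simp add: divide_le_eq)
  interpret prob_space M using standard_BM_prob_space[OF bm] .
  have [measurable]: "W T \<in> borel_measurable M" "W 0 \<in> borel_measurable M"
    using standard_BM_measurable[OF bm] T_pos by auto
  define G where "G = {\<omega> \<in> space M. (y + \<beta>) / 3 \<le> W T \<omega> - W 0 \<omega>}"
  define Osc where "Osc = (\<Union>i\<le>N. {\<omega> \<in> space M. \<not> small_dyadic_increments (\<lambda>t. W t \<omega>) (real i * h) h (\<beta> / 24)})"
  define Drop where "Drop = (\<Union>i\<le>N. \<Union>k\<in>{1..N}.
    {\<omega> \<in> space M. \<beta> / 6 + y / 3 * (real k * h) \<le> W (real i * h) \<omega> - W (real (i + k) * h) \<omega>})"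
  have G_sets: "G \<in> events" unfolding G_def by measurable
  have Osc_sets: "Osc \<in> events"
    unfolding Osc_def using h_pos by (intro sets.finite_UN not_small_dyadic_increments_sets[OF bm]) auto
  have [measurable]: "W (real i * h) \<in> borel_measurable M" for i :: nat
    using h_pos by (intro standard_BM_measurable[OF bm]) simp
  have Drop_sets: "Drop \<in> events"
    unfolding Drop_def by (intro sets.finite_UN finite_atLeastAtMost finite_atMost ballI) measurable
  from AE_hit_order_imp_grid_events[OF bm rs \<beta> y h_def T_def TN]
  have "AE \<omega> in M. \<omega> \<in> {\<omega> \<in> space M. hit_time Q1 (- \<beta> / 2) \<omega> \<le> hit_time Q2 (y / 2 + \<beta>) \<omega>}
      \<longrightarrow> \<omega> \<in> G \<union> Osc \<union> Drop"
    by (rule eventually_mono) (auto simp: G_def Osc_def Drop_def)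
  then have "prob {\<omega> \<in> space M. hit_time Q1 (- \<beta> / 2) \<omega> \<le> hit_time Q2 (y / 2 + \<beta>) \<omega>}
      \<le> prob (G \<union> Osc \<union> Drop)"
    using G_sets Osc_sets Drop_sets by (intro finite_measure_mono_AE) auto
  also have "\<dots> \<le> prob G + prob Osc + prob Drop"
    using G_sets Osc_sets Drop_sets measure_Un_le[of G M Osc] measure_Un_le[of "G \<union> Osc" M Drop] by auto
  also have "prob G \<le> exp (- (\<beta> * y) / 36)"
  proof -
    have "prob G \<le> exp (- ((y + \<beta>) / 3)\<^sup>2 / (2 * (T - 0)))"
      unfolding G_def using \<beta> y T_pos by (intro standard_BM_increment_ge[OF bm]) auto
    also have "\<dots> = exp (- ((y + \<beta>) * \<beta> / 36))"
      unfolding T_def using \<beta> y by (simp add: field_simps power2_eq_square)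
    also have "\<dots> \<le> exp (- (\<beta> * y) / 36)"
      using \<beta> by (simp add: algebra_simps)
    finally show ?thesis .
  qed
  also have "prob Osc \<le> (real N + 1) * (6 * exp (- (\<beta> * y) / 4))"
    unfolding Osc_def using large by (intro prob_grid_oscillations[OF bm \<beta> y h_def]) auto
  also have "prob Drop \<le> (real N + 1) * exp (- (\<beta> * y) / 12)"
    unfolding Drop_def by (rule prob_grid_drops[OF bm \<beta> y h_def large])
  finally show ?thesis by (simp add: algebra_simps)
qed
lemma sq_div_4_le_exp:
  fixes z :: real
  assumes "0 \<le> z"
  shows "z\<^sup>2 / 4 \<le> exp z"
proof -
  have "z / 2 \<le> exp (z / 2)" using exp_ge_add_one_self[of "z / 2"] by linarith
  then have "(z / 2)\<^sup>2 \<le> (exp (z / 2))\<^sup>2" using assms by (intro power_mono) auto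
  also have "(exp (z / 2))\<^sup>2 = exp z" by (simp add: power2_eq_square exp_add[symmetric])
  finally show ?thesis by (simp add: power2_eq_square)
qed

lemma admissible_y_pos:
  fixes \<beta> y :: real
  assumes \<beta>: "\<beta> > 0" and range: "(1 \<le> \<beta> \<and> 1 / (4 * \<beta>) \<le> y) \<or> (\<beta> < 1 \<and> 64 / \<beta> * ln (1 / \<beta>) \<le> y)"
  shows "y > 0"
proof (cases "1 \<le> \<beta>")
  case True
  then show ?thesis using range \<beta> by (auto intro: less_le_trans[of 0 "1 / (4 * \<beta>)"])
next
  case False
  then have "0 < 64 / \<beta> * ln (1 / \<beta>)" using \<beta> by simp
  then show ?thesis using range False by auto
qed

text \<open>This is where the lower bound on \<open>y\<close> enters: it makes the number of grid points, which is
  polynomial in \<open>1 / \<beta>\<close>, negligible against the exponential decay in \<open>\<beta> y\<close>.\<close>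
lemma admissible_inverse_sq_le_exp:
  fixes \<beta> y :: real
  assumes \<beta>: "\<beta> > 0" and range: "(1 \<le> \<beta> \<and> 1 / (4 * \<beta>) \<le> y) \<or> (\<beta> < 1 \<and> 64 / \<beta> * ln (1 / \<beta>) \<le> y)"
  shows "1 / \<beta>\<^sup>2 \<le> exp (\<beta> * y / 32)"
proof (cases "1 \<le> \<beta>")
  case True
  have "1 \<le> \<beta> * \<beta>" using True mult_mono[of 1 \<beta> 1 \<beta>] by simp
  then have "1 / \<beta>\<^sup>2 \<le> 1" by (simp add: power2_eq_square)
  also have "1 \<le> exp (\<beta> * y / 32)" using admissible_y_pos[OF \<beta> range] \<beta> by simp
  finally show ?thesis .
next
  case False
  with range have "64 / \<beta> * ln (1 / \<beta>) \<le> y" by auto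
  then have "\<beta> * (64 / \<beta> * ln (1 / \<beta>)) \<le> \<beta> * y" using \<beta> by (intro mult_left_mono) auto
  then have "2 * ln (1 / \<beta>) \<le> \<beta> * y / 32" using \<beta> by simp
  then have "exp (2 * ln (1 / \<beta>)) \<le> exp (\<beta> * y / 32)" by simp
  moreover have "exp (2 * ln (1 / \<beta>)) = 1 / \<beta>\<^sup>2"
    using \<beta> by (simp add: exp_of_nat_mult[of 2, simplified] power2_eq_square)
  ultimately show ?thesis by simp
qed

lemma grid_size_le:
  fixes \<beta> y :: real
  assumes \<beta>: "\<beta> > 0" and y: "y > 0" and inv: "1 / \<beta>\<^sup>2 \<le> exp (\<beta> * y / 32)" and x: "1 \<le> \<beta> * y"
  shows "real (nat \<lceil>2 * (y + \<beta>) / \<beta> / (\<beta> / (4608 * y))\<rceil>) + 1 \<le> 18434 * (\<beta> * y)\<^sup>2 * exp (\<beta> * y / 16)"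
proof -
  define x where "x = \<beta> * y"
  define v where "v = 1 / \<beta>\<^sup>2"
  define E where "E = exp (x / 16)"
  define z where "z = 2 * (y + \<beta>) / \<beta> / (\<beta> / (4608 * y))"
  have x1: "1 \<le> x" using assms unfolding x_def by simp
  have v0: "0 \<le> v" unfolding v_def by simp
  have E1: "1 \<le> E" unfolding E_def using x1 by simp
  have z: "z = 9216 * (x\<^sup>2 * v\<^sup>2 + x * v)"
    unfolding z_def x_def v_def using \<beta> y by (simp add: field_simps power2_eq_square)
  have "real (nat \<lceil>z\<rceil>) = of_int \<lceil>z\<rceil>" using z v0 x1 by simp
  then have "real (nat \<lceil>z\<rceil>) + 1 \<le> z + 2" by linarith
  also have "z + 2 \<le> 9216 * (x\<^sup>2 * E + x * E) + 2 * E"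
  proof -
    have "v \<le> exp (x / 32)" using inv unfolding v_def x_def .
    also have "\<dots> \<le> E" unfolding E_def using x1 by simp
    finally have "x * v \<le> x * E" using x1 by (intro mult_left_mono) auto
    moreover have "v\<^sup>2 \<le> (exp (x / 32))\<^sup>2" using inv v0 unfolding v_def x_def by (intro power_mono) auto
    then have "x\<^sup>2 * v\<^sup>2 \<le> x\<^sup>2 * E"
      unfolding E_def by (intro mult_left_mono) (simp_all add: power2_eq_square exp_add[symmetric])
    ultimately show ?thesis unfolding z using E1 by simp
  qed
  also have "\<dots> \<le> 18434 * x\<^sup>2 * E"
  proof -
    have "x \<le> x\<^sup>2" using mult_right_mono[of 1 x x] x1 by (simp add: power2_eq_square)
    then have "x * E \<le> x\<^sup>2 * E" using E1 by (intro mult_right_mono) auto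
    moreover have "E \<le> x\<^sup>2 * E" using \<open>x \<le> x\<^sup>2\<close> x1 E1 by (simp add: mult_le_cancel_right1)
    ultimately show ?thesis by (simp add: algebra_simps)
  qed
  finally show ?thesis unfolding z_def x_def E_def .
qed

lemma hit_order_bound_le_exp:
  fixes \<beta> y :: real
  assumes \<beta>: "\<beta> > 0" and y: "y > 0" and inv: "1 / \<beta>\<^sup>2 \<le> exp (\<beta> * y / 32)" and large: "165888 \<le> \<beta> * y"
  shows "exp (- (\<beta> * y) / 36) + (real (nat \<lceil>2 * (y + \<beta>) / \<beta> / (\<beta> / (4608 * y))\<rceil>) + 1)
        * (6 * exp (- (\<beta> * y) / 4) + exp (- (\<beta> * y) / 12)) \<le> 5000000000 * exp (- (\<beta> * y) / 96)"
proof -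
  define x where "x = \<beta> * y"
  have x: "1 \<le> x" using large unfolding x_def by simp
  have "(real (nat \<lceil>2 * (y + \<beta>) / \<beta> / (\<beta> / (4608 * y))\<rceil>) + 1) * (6 * exp (- x / 4) + exp (- x / 12))
      \<le> (18434 * x\<^sup>2 * exp (x / 16)) * (7 * exp (- x / 12))"
    using grid_size_le[OF \<beta> y inv] x unfolding x_def by (intro mult_mono) auto
  also have "\<dots> = 129038 * x\<^sup>2 * exp (- x / 48)"
    by (simp add: exp_add[symmetric])
  also have "\<dots> \<le> 129038 * (36864 * exp (x / 96)) * exp (- x / 48)"
    using sq_div_4_le_exp[of "x / 96"] x by (simp add: power2_eq_square)
  also have "\<dots> = 4756856832 * exp (- x / 96)"
    by (simp add: exp_add[symmetric])
  finally have "(real (nat \<lceil>2 * (y + \<beta>) / \<beta> / (\<beta> / (4608 * y))\<rceil>) + 1)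
      * (6 * exp (- x / 4) + exp (- x / 12)) \<le> 4756856832 * exp (- x / 96)" .
  moreover have "exp (- x / 36) \<le> exp (- x / 96)" "0 < exp (- x / 96)" using x by simp_all
  ultimately show ?thesis unfolding x_def by linarith
qed

lemma prob_hit_order_le_exp:
  fixes M :: "'a measure"
  assumes \<beta>: "\<beta> > 0" and range: "(1 \<le> \<beta> \<and> 1 / (4 * \<beta>) \<le> y) \<or> (\<beta> < 1 \<and> 64 / \<beta> * ln (1 / \<beta>) \<le> y)"
    and bm: "standard_BM M W" and rs: "reflected_solution M \<beta> 0 (y + \<beta>) W Q1 Q2 L"
  shows "measure M {\<omega> \<in> space M. hit_time Q1 (- \<beta> / 2) \<omega> \<le> hit_time Q2 (y / 2 + \<beta>) \<omega>}
           \<le> (exp 1728 + 5000000000) * exp (- (1/96) * \<beta> * y)"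
proof (cases "165888 \<le> \<beta> * y")
  case True
  have "measure M {\<omega> \<in> space M. hit_time Q1 (- \<beta> / 2) \<omega> \<le> hit_time Q2 (y / 2 + \<beta>) \<omega>}
      \<le> 5000000000 * exp (- (\<beta> * y) / 96)"
    using prob_hit_order_le[OF bm rs \<beta> admissible_y_pos[OF \<beta> range] True]
      hit_order_bound_le_exp[OF \<beta> admissible_y_pos[OF \<beta> range] admissible_inverse_sq_le_exp[OF \<beta> range] True]
    by linarith
  then show ?thesis by (simp add: distrib_right add_increasing)
next
  case False
  have "measure M {\<omega> \<in> space M. hit_time Q1 (- \<beta> / 2) \<omega> \<le> hit_time Q2 (y / 2 + \<beta>) \<omega>} \<le> 1"
    using prob_space.prob_le_1[OF standard_BM_prob_space[OF bm]] by simp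
  also have "1 \<le> exp (1728 - \<beta> * y / 96)" using False by simp
  also have "\<dots> = exp 1728 * exp (- (1/96) * \<beta> * y)" by (simp add: exp_add[symmetric])
  also have "\<dots> \<le> (exp 1728 + 5000000000) * exp (- (1/96) * \<beta> * y)" by (intro mult_right_mono) auto
  finally show ?thesis .
qed

theorem lemma5p1:
  shows "\<exists>C1>0. \<exists>C2>0. \<forall>\<beta>::real. \<forall>y::real.
     \<beta> > 0 \<and> ((1 \<le> \<beta> \<and> 1 / (4 * \<beta>) \<le> y) \<or> (\<beta> < 1 \<and> 64 / \<beta> * ln (1 / \<beta>) \<le> y)) \<longrightarrow>
     (\<forall>(M::'a measure) W Q1 Q2 L.
        standard_BM M W \<and> reflected_solution M \<beta> 0 (y + \<beta>) W Q1 Q2 L \<longrightarrow>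
        measure M {\<omega> \<in> space M. hit_time Q1 (- \<beta> / 2) \<omega> \<le> hit_time Q2 (y / 2 + \<beta>) \<omega>}
          \<le> C1 * exp (- C2 * \<beta> * y))"
  by (rule exI[of _ "exp 1728 + 5000000000"], rule conjI, simp add: add_pos_pos,
      rule exI[of _ "1/96"], rule conjI, simp)
     (blast intro: prob_hit_order_le_exp)

end
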